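(* For every integer $0\le k\le n$, the set $H_n^k$ is a single orbit of the action $(\pi,\sigma)\bullet A=\pi A\sigma^{-1}$ of $S_n\times S_n$; more explicitly, $$H_n^k=\{\pi\, U_{n,k}\,\sigma \mid \pi,\sigma\in S_n\}.$$
   Context: Permutations are composed as functions, and $\pi\in S_n$ is identified with the $n\times n$ permutation matrix whose $(i,j)$ entry is $1$ iff $i=\pi(j)$. For $A\in GL_n(\mathbb{Z}_2)$ let $\eta(A)$ be the partition obtained by sorting the row sums of $A$ (number of entries equal to $1$ in each row, computed as integers) in weakly decreasing order, and $\theta(A)$ the analogous partition for the column sums. For $0\le k\le n$ define $$H_n^k=\{A\in GL_n(\mathbb{Z}_2)\mid \eta(A)=(n,n-1,\dots,n-k+1,\underbrace{1,\dots,1}_{n-k}),\ \theta(A)=(\underbrace{k+1,\dots,k+1}_{n-k},k,k-1,\dots,2,1)\}.$$ $U_{n,k}$ is the $n\times n$ $(0,1)$-matrix whose upper left $k\times k$ block is upper triangular with all entries on and above the diagonal equal to $1$, whose upper right $k\times(n-k)$ block has all entries $1$, whose lower left $(n-k)\times k$ block is zero, and whose lower right $(n-k)\times(n-k)$ block is the identity $I_{n-k}$. *)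

theory Defs
  imports "Jordan_Normal_Form.Matrix" "HOL-Library.Z2" "HOL-Combinatorics.Permutations"
begin

text \<open>Matrices over Z_2 are Jordan_Normal_Form matrices with entries in the field type bit.
Indices are 0-based: rows and columns range over 0..n-1.\<close>

definition perm_mat :: "nat \<Rightarrow> (nat \<Rightarrow> nat) \<Rightarrow> bit mat" where
  "perm_mat n p = mat n n (\<lambda>(i,j). if i = p j then 1 else 0)"

definition GL2 :: "nat \<Rightarrow> bit mat set" where
  "GL2 n = {A. A \<in> carrier_mat n n \<and> invertible_mat A}"

definition eta :: "bit mat \<Rightarrow> nat list" where
  "eta A = rev (sort (map (\<lambda>i. card {j. j < dim_col A \<and> A $$ (i,j) = 1}) [0..<dim_row A]))"

definition theta :: "bit mat \<Rightarrow> nat list" where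
  "theta A = rev (sort (map (\<lambda>j. card {i. i < dim_row A \<and> A $$ (i,j) = 1}) [0..<dim_col A]))"

definition eta_target :: "nat \<Rightarrow> nat \<Rightarrow> nat list" where
  "eta_target n k = map (\<lambda>i. n - i) [0..<k] @ replicate (n - k) 1"

definition theta_target :: "nat \<Rightarrow> nat \<Rightarrow> nat list" where
  "theta_target n k = replicate (n - k) (k + 1) @ map (\<lambda>i. k - i) [0..<k]"

definition H :: "nat \<Rightarrow> nat \<Rightarrow> bit mat set" where
  "H n k = {A \<in> GL2 n. eta A = eta_target n k \<and> theta A = theta_target n k}"

definition U :: "nat \<Rightarrow> nat \<Rightarrow> bit mat" where
  "U n k = mat n n (\<lambda>(i,j). if i < k then (if i \<le> j then 1 else 0)
                           else (if j = i then 1 else 0))"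

end

theory Submission
  imports Defs "Jordan_Normal_Form.Determinant"
begin

text \<open>
  Permuting rows and columns only reorders the row sums and the column sums, and permutation
  matrices and U_{n,k} are invertible, so every \<pi> U_{n,k} \<sigma> lies in H_n^k.

  Conversely, permute the rows and columns of A \<in> H_n^k so that, as for U_{n,k}, row a has
  n - a ones for a < k and one 1 otherwise, while column b has b + 1 ones for b < k and k + 1
  otherwise. For m \<le> k the first m rows then carry exactly m (n - m) more ones than the first
  m columns. Only the upper right m \<times> (n - m) block can account for this excess, and it has
  exactly m (n - m) entries, so it is full and the lower left block is empty. Letting m run up
  to k pins down the first k rows as those of U_{n,k}; the remaining rows have their single 1 in
  the lower right block, whose columns then also contain a single 1 each, so that block is a
  permutation matrix.
\<close>

lemma sort_eq_iff_mset_eq: "sort xs = sort ys \<longleftrightarrow> mset xs = mset ys"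
  by (metis mset_sort sorted_list_of_multiset_mset)

lemma rev_sort_eq_if_sorted_rev: "sorted (rev xs) \<Longrightarrow> rev (sort xs) = xs"
  by (metis mset_rev rev_rev_ident sort_eq_iff_mset_eq sorted_sort_id)

lemma mset_map_upt_eq_iff_permutes:
  "mset (map f [0..<n]) = mset (map g [0..<n]) \<longleftrightarrow>
     (\<exists>p. p permutes {..<n} \<and> (\<forall>i<n. f i = g (p i)))"
proof
  assume "mset (map f [0..<n]) = mset (map g [0..<n])"
  then obtain p where p: "p permutes {..<n}" and "permute_list p (map g [0..<n]) = map f [0..<n]"
    by (metis length_map length_upt minus_nat.diff_0 mset_eq_permutation)
  then have "f i = g (p i)" if "i < n" for i
    using that permutes_in_image[OF p, of i]
    by (metis diff_zero length_map length_upt lessThan_iff nth_map_upt permute_list_nth add_0)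
  with p show "\<exists>p. p permutes {..<n} \<and> (\<forall>i<n. f i = g (p i))" by blast
next
  assume "\<exists>p. p permutes {..<n} \<and> (\<forall>i<n. f i = g (p i))"
  then obtain p where "p permutes {..<n}" "\<And>i. i < n \<Longrightarrow> f i = g (p i)" by blast
  then have "image_mset g (mset_set {..<n}) = image_mset f (mset_set {..<n})"
    by (intro permutes_implies_image_mset_eq) auto
  then show "mset (map f [0..<n]) = mset (map g [0..<n])"
    by (simp add: mset_map mset_upt atLeast0LessThan)
qed

lemma card_permutes_reindex:
  assumes "\<sigma> permutes {..<n}"
  shows "card {j. j < n \<and> P (\<sigma> j)} = card {j. j < n \<and> P j}"
proof -
  have "bij_betw \<sigma> {j \<in> {..<n}. P (\<sigma> j)} {j \<in> {..<n}. P j}"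
    by (rule bij_betw_Collect[OF permutes_imp_bij[OF assms]]) simp
  then show ?thesis by (simp add: bij_betw_same_card)
qed

definition row_ones :: "'a::one mat \<Rightarrow> nat \<Rightarrow> nat" where
  "row_ones A i = card {j. j < dim_col A \<and> A $$ (i, j) = 1}"

definition col_ones :: "'a::one mat \<Rightarrow> nat \<Rightarrow> nat" where
  "col_ones A j = card {i. i < dim_row A \<and> A $$ (i, j) = 1}"

lemma eta_conv_row_ones: "eta A = rev (sort (map (row_ones A) [0..<dim_row A]))"
  unfolding eta_def row_ones_def [abs_def] ..

lemma theta_conv_col_ones: "theta A = rev (sort (map (col_ones A) [0..<dim_col A]))"
  unfolding theta_def col_ones_def [abs_def] ..

lemma eta_eq_iff_row_ones_permuted:
  assumes "A \<in> carrier_mat n n" "B \<in> carrier_mat n n"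
  shows "eta A = eta B \<longleftrightarrow> (\<exists>p. p permutes {..<n} \<and> (\<forall>i<n. row_ones A i = row_ones B (p i)))"
proof -
  have "eta A = eta B \<longleftrightarrow> sort (map (row_ones A) [0..<n]) = sort (map (row_ones B) [0..<n])"
    using assms by (simp add: eta_conv_row_ones)
  then show ?thesis unfolding sort_eq_iff_mset_eq mset_map_upt_eq_iff_permutes .
qed

lemma theta_eq_iff_col_ones_permuted:
  assumes "A \<in> carrier_mat n n" "B \<in> carrier_mat n n"
  shows "theta A = theta B \<longleftrightarrow> (\<exists>q. q permutes {..<n} \<and> (\<forall>j<n. col_ones A j = col_ones B (q j)))"
proof -
  have "theta A = theta B \<longleftrightarrow> sort (map (col_ones A) [0..<n]) = sort (map (col_ones B) [0..<n])"
    using assms by (simp add: theta_conv_col_ones)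
  then show ?thesis unfolding sort_eq_iff_mset_eq mset_map_upt_eq_iff_permutes .
qed

lemma perm_mat_carrier [simp]: "perm_mat n p \<in> carrier_mat n n"
  by (simp add: perm_mat_def)

lemma dim_perm_mat [simp]: "dim_row (perm_mat n p) = n" "dim_col (perm_mat n p) = n"
  by (simp_all add: perm_mat_def)

text \<open>HOL-Algebra, imported through the determinant theory, reserves the syntax inv for group
  inverses, so inverse permutations are written inv_into UNIV.\<close>

lemma index_perm_mat_mult:
  assumes "\<pi> permutes {..<n}" "M \<in> carrier_mat n m" "i < n" "j < m"
  shows "(perm_mat n \<pi> * M) $$ (i, j) = M $$ (inv_into UNIV \<pi> i, j)"
proof -
  have "(perm_mat n \<pi> * M) $$ (i, j) = (\<Sum>l<n. (if i = \<pi> l then 1 else 0) * M $$ (l, j))"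
    using assms by (simp add: perm_mat_def scalar_prod_def atLeast0LessThan)
  also have "\<dots> = (\<Sum>l<n. if l = inv_into UNIV \<pi> i then M $$ (l, j) else 0)"
  proof (rule sum.cong)
    fix l
    have "i = \<pi> l \<longleftrightarrow> l = inv_into UNIV \<pi> i"
      using permutes_inv_eq[OF assms(1), of i l] by auto
    then show "(if i = \<pi> l then 1 else 0) * M $$ (l, j) =
        (if l = inv_into UNIV \<pi> i then M $$ (l, j) else 0)"
      by simp
  qed simp
  also have "\<dots> = M $$ (inv_into UNIV \<pi> i, j)"
    using permutes_in_image[OF permutes_inv[OF assms(1)]] assms(3) by simp
  finally show ?thesis .
qed

lemma index_mult_perm_mat:
  assumes "\<sigma> permutes {..<m}" "M \<in> carrier_mat n m" "i < n" "j < m"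
  shows "(M * perm_mat m \<sigma>) $$ (i, j) = M $$ (i, \<sigma> j)"
proof -
  have "(M * perm_mat m \<sigma>) $$ (i, j) = (\<Sum>l<m. M $$ (i, l) * (if l = \<sigma> j then 1 else 0))"
    using assms by (simp add: perm_mat_def scalar_prod_def atLeast0LessThan)
  also have "\<dots> = M $$ (i, \<sigma> j)"
    using permutes_in_image[OF assms(1)] assms(4) by (simp add: if_distrib cong: if_cong)
  finally show ?thesis .
qed

lemma index_perm_mat_mult_mult:
  assumes "\<pi> permutes {..<n}" "\<sigma> permutes {..<n}" "M \<in> carrier_mat n n" "i < n" "j < n"
  shows "(perm_mat n \<pi> * M * perm_mat n \<sigma>) $$ (i, j) = M $$ (inv_into UNIV \<pi> i, \<sigma> j)"
proof -
  have PM: "perm_mat n \<pi> * M \<in> carrier_mat n n"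
    using assms(3) by (rule mult_carrier_mat[OF perm_mat_carrier])
  have "(perm_mat n \<pi> * M * perm_mat n \<sigma>) $$ (i, j) = (perm_mat n \<pi> * M) $$ (i, \<sigma> j)"
    by (rule index_mult_perm_mat[OF assms(2) PM assms(4,5)])
  also have "\<dots> = M $$ (inv_into UNIV \<pi> i, \<sigma> j)"
    using permutes_in_image[OF assms(2)] assms by (intro index_perm_mat_mult) auto
  finally show ?thesis .
qed

lemma eq_perm_mat_mult_mult_if_index:
  assumes "\<pi> permutes {..<n}" "\<sigma> permutes {..<n}" "A \<in> carrier_mat n n" "M \<in> carrier_mat n n"
    and index: "\<And>i j. i < n \<Longrightarrow> j < n \<Longrightarrow> A $$ (i, j) = M $$ (\<pi> i, \<sigma> j)"
  shows "A = perm_mat n (inv_into UNIV \<pi>) * M * perm_mat n \<sigma>"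
proof (rule eq_matI)
  fix i j assume "i < dim_row (perm_mat n (inv_into UNIV \<pi>) * M * perm_mat n \<sigma>)"
    "j < dim_col (perm_mat n (inv_into UNIV \<pi>) * M * perm_mat n \<sigma>)"
  then have ij: "i < n" "j < n"
    by simp_all
  have "A $$ (i, j) = M $$ (inv_into UNIV (inv_into UNIV \<pi>) i, \<sigma> j)"
    using index[OF ij] permutes_inv_inv[OF assms(1)] by simp
  also have "\<dots> = (perm_mat n (inv_into UNIV \<pi>) * M * perm_mat n \<sigma>) $$ (i, j)"
    by (rule index_perm_mat_mult_mult[OF permutes_inv[OF assms(1)] assms(2,4) ij, symmetric])
  finally show "A $$ (i, j) = (perm_mat n (inv_into UNIV \<pi>) * M * perm_mat n \<sigma>) $$ (i, j)" .
qed (use assms(3) in simp_all)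

lemma row_ones_perm_mat_mult_mult:
  assumes "\<pi> permutes {..<n}" "\<sigma> permutes {..<n}" "M \<in> carrier_mat n n" "i < n"
  shows "row_ones (perm_mat n \<pi> * M * perm_mat n \<sigma>) i = row_ones M (inv_into UNIV \<pi> i)"
proof -
  have "row_ones (perm_mat n \<pi> * M * perm_mat n \<sigma>) i
      = card {j. j < n \<and> M $$ (inv_into UNIV \<pi> i, \<sigma> j) = 1}"
    unfolding row_ones_def index_mult_mat(3) dim_perm_mat
    by (intro arg_cong[where f = card] Collect_cong conj_cong refl)
      (simp only: index_perm_mat_mult_mult[OF assms])
  also have "\<dots> = row_ones M (inv_into UNIV \<pi> i)"
    using card_permutes_reindex[OF assms(2)] assms(3) by (simp add: row_ones_def)
  finally show ?thesis .
qed

lemma col_ones_perm_mat_mult_mult: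
  assumes "\<pi> permutes {..<n}" "\<sigma> permutes {..<n}" "M \<in> carrier_mat n n" "j < n"
  shows "col_ones (perm_mat n \<pi> * M * perm_mat n \<sigma>) j = col_ones M (\<sigma> j)"
proof -
  have "col_ones (perm_mat n \<pi> * M * perm_mat n \<sigma>) j
      = card {i. i < n \<and> M $$ (inv_into UNIV \<pi> i, \<sigma> j) = 1}"
    unfolding col_ones_def index_mult_mat(2) dim_perm_mat
    by (intro arg_cong[where f = card] Collect_cong conj_cong refl)
      (simp only: index_perm_mat_mult_mult[OF assms(1-3) _ assms(4)])
  also have "\<dots> = col_ones M (\<sigma> j)"
    using card_permutes_reindex[OF permutes_inv[OF assms(1)]] assms(3) by (simp add: col_ones_def)
  finally show ?thesis .
qed

lemma eta_perm_mat_mult_mult: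
  assumes "\<pi> permutes {..<n}" "\<sigma> permutes {..<n}" "M \<in> carrier_mat n n"
  shows "eta (perm_mat n \<pi> * M * perm_mat n \<sigma>) = eta M"
  using assms permutes_inv[OF assms(1)]
  by (subst eta_eq_iff_row_ones_permuted[of _ n]) (auto simp: row_ones_perm_mat_mult_mult)

lemma theta_perm_mat_mult_mult:
  assumes "\<pi> permutes {..<n}" "\<sigma> permutes {..<n}" "M \<in> carrier_mat n n"
  shows "theta (perm_mat n \<pi> * M * perm_mat n \<sigma>) = theta M"
  using assms
  by (subst theta_eq_iff_col_ones_permuted[of _ n]) (auto simp: col_ones_perm_mat_mult_mult)

lemma invertible_mat_if_det_nonzero:
  fixes A :: "'a::field mat"
  assumes A: "A \<in> carrier_mat n n" and "det A \<noteq> 0"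
  shows "invertible_mat A"
proof -
  obtain B where B: "B \<in> carrier_mat n n" "B * A = 1\<^sub>m n" "A * B = 1\<^sub>m n"
    using det_non_zero_imp_unit[OF assms, of undefined] unfolding Units_def ring_mat_def by auto
  then show ?thesis
    using A unfolding invertible_mat_def inverts_mat_def by auto
qed

lemma perm_mat_mult_perm_mat_inv:
  assumes "\<pi> permutes {..<n}"
  shows "perm_mat n \<pi> * perm_mat n (inv_into UNIV \<pi>) = 1\<^sub>m n"
proof (rule eq_matI)
  fix i j assume "i < dim_row (1\<^sub>m n :: bit mat)" "j < dim_col (1\<^sub>m n :: bit mat)"
  then have ij: "i < n" "j < n" by simp_all
  then have "(perm_mat n \<pi> * perm_mat n (inv_into UNIV \<pi>)) $$ (i, j)
      = perm_mat n \<pi> $$ (i, inv_into UNIV \<pi> j)"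
    by (intro index_mult_perm_mat[OF permutes_inv[OF assms] perm_mat_carrier])
  also have "\<dots> = 1\<^sub>m n $$ (i, j)"
    using ij permutes_inverses(1)[OF assms] permutes_in_image[OF permutes_inv[OF assms]]
    by (simp add: perm_mat_def)
  finally show "(perm_mat n \<pi> * perm_mat n (inv_into UNIV \<pi>)) $$ (i, j) = 1\<^sub>m n $$ (i, j)" .
qed simp_all

lemma det_perm_mat_nonzero:
  assumes "\<pi> permutes {..<n}"
  shows "det (perm_mat n \<pi>) \<noteq> 0"
proof -
  have "det (perm_mat n \<pi>) * det (perm_mat n (inv_into UNIV \<pi>)) = 1"
    using det_mult[OF perm_mat_carrier perm_mat_carrier] perm_mat_mult_perm_mat_inv[OF assms]
    by (metis det_one)
  then show ?thesis by auto
qed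

lemma invertible_perm_mat_mult_mult:
  assumes "\<pi> permutes {..<n}" "\<sigma> permutes {..<n}" "M \<in> carrier_mat n n" "det M \<noteq> 0"
  shows "invertible_mat (perm_mat n \<pi> * M * perm_mat n \<sigma>)"
proof (rule invertible_mat_if_det_nonzero)
  have PM: "perm_mat n \<pi> * M \<in> carrier_mat n n"
    using assms(3) by (rule mult_carrier_mat[OF perm_mat_carrier])
  then show "perm_mat n \<pi> * M * perm_mat n \<sigma> \<in> carrier_mat n n"
    by (rule mult_carrier_mat[OF _ perm_mat_carrier])
  show "det (perm_mat n \<pi> * M * perm_mat n \<sigma>) \<noteq> 0"
    using assms det_perm_mat_nonzero
    by (simp add: det_mult[OF PM perm_mat_carrier] det_mult[OF perm_mat_carrier assms(3)])
qed

lemma U_carrier [simp]: "U n k \<in> carrier_mat n n"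
  by (simp add: U_def)

lemma dim_U [simp]: "dim_row (U n k) = n" "dim_col (U n k) = n"
  by (simp_all add: U_def)

lemma U_eq_one_iff:
  assumes "i < n" "j < n"
  shows "U n k $$ (i, j) = 1 \<longleftrightarrow> (if i < k then i \<le> j else j = i)"
  using assms by (simp add: U_def)

lemma row_ones_U:
  assumes "a < n"
  shows "row_ones (U n k) a = (if a < k then n - a else 1)"
proof -
  have "{j. j < n \<and> U n k $$ (a, j) = 1} = (if a < k then {a..<n} else {a})"
    using assms by (auto simp: U_eq_one_iff)
  then show ?thesis by (simp add: row_ones_def)
qed

lemma col_ones_U:
  assumes "k \<le> n" "b < n"
  shows "col_ones (U n k) b = (if b < k then b + 1 else k + 1)"
proof -
  have "{i. i < n \<and> U n k $$ (i, b) = 1} = (if b < k then {..b} else insert b {..<k})"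
    using assms by (auto simp: U_eq_one_iff split: if_splits)
  then show ?thesis by (simp add: col_ones_def)
qed

lemma eta_U:
  assumes "k \<le> n"
  shows "eta (U n k) = eta_target n k"
proof -
  have "map (row_ones (U n k)) [0..<n] = eta_target n k"
    using assms by (intro nth_equalityI) (auto simp: eta_target_def nth_append row_ones_U)
  moreover have "sorted (rev (eta_target n k))"
    unfolding eta_target_def sorted_wrt_rev using assms
    by (auto simp: sorted_wrt_iff_nth_less nth_append)
  ultimately show ?thesis
    by (simp add: eta_conv_row_ones rev_sort_eq_if_sorted_rev)
qed

lemma theta_U:
  assumes "k \<le> n"
  shows "theta (U n k) = theta_target n k"
proof -
  have "sorted (map (col_ones (U n k)) [0..<n])"
    using assms by (auto simp: sorted_iff_nth_mono col_ones_U)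
  moreover have "rev (map (col_ones (U n k)) [0..<n]) = theta_target n k"
    using assms by (intro nth_equalityI) (auto simp: theta_target_def nth_append rev_nth col_ones_U)
  ultimately show ?thesis
    by (simp add: theta_conv_col_ones sorted_sort_id)
qed

lemma det_U: "det (U n k) = 1"
proof -
  have "upper_triangular (U n k)"
    by (rule upper_triangularI) (auto simp: U_def)
  moreover have "diag_mat (U n k) = replicate n 1"
    by (intro nth_equalityI) (auto simp: diag_mat_def U_def)
  ultimately show ?thesis
    by (simp add: det_upper_triangular[OF _ U_carrier])
qed

lemma staircase_sum:
  fixes m n :: nat
  shows "m \<le> n \<Longrightarrow> (\<Sum>a<m. n - a) = (\<Sum>b<m. b + 1) + m * (n - m)"
proof (induction m)
  case (Suc m)
  then have "(\<Sum>a<Suc m. n - a) = (\<Sum>b<m. b + 1) + m * (n - m) + (n - m)"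
    by simp
  also have "\<dots> = (\<Sum>b<Suc m. b + 1) + Suc m * (n - Suc m)"
  proof -
    obtain d where "n = Suc m + d"
      using Suc.prems le_Suc_ex by blast
    then show ?thesis by simp
  qed
  finally show ?case .
qed simp

lemma corner_blocks:
  fixes R :: "nat \<Rightarrow> nat \<Rightarrow> bool"
  assumes "m \<le> n"
    and excess: "(\<Sum>a<m. card {b. b < n \<and> R a b}) = (\<Sum>b<m. card {a. a < n \<and> R a b}) + m * (n - m)"
  shows "\<forall>a b. m \<le> a \<longrightarrow> a < n \<longrightarrow> b < m \<longrightarrow> \<not> R a b"
    and "\<forall>a b. a < m \<longrightarrow> m \<le> b \<longrightarrow> b < n \<longrightarrow> R a b"
proof -
  define S11 where "S11 = {(a, b). a < m \<and> b < m \<and> R a b}"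
  define S12 where "S12 = {(a, b). a < m \<and> m \<le> b \<and> b < n \<and> R a b}"
  define S21 where "S21 = {(a, b). m \<le> a \<and> a < n \<and> b < m \<and> R a b}"
  have S12_sub: "S12 \<subseteq> {..<m} \<times> {m..<n}"
    by (auto simp: S12_def)
  have "finite S11"
    by (rule finite_subset[of _ "{..<m} \<times> {..<m}"]) (auto simp: S11_def)
  moreover have "finite S12"
    using S12_sub by (rule finite_subset) simp
  moreover have "finite S21"
    by (rule finite_subset[of _ "{..<n} \<times> {..<m}"]) (auto simp: S21_def)
  ultimately have fin: "finite S11" "finite S12" "finite S21" .
  have "card S11 + card S12 = card (S11 \<union> S12)"
    using fin by (intro card_Un_disjoint[symmetric]) (auto simp: S11_def S12_def)
  also have "S11 \<union> S12 = Sigma {..<m} (\<lambda>a. {b. b < n \<and> R a b})"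
    using \<open>m \<le> n\<close> by (auto simp: S11_def S12_def)
  finally have rows: "card S11 + card S12 = (\<Sum>a<m. card {b. b < n \<and> R a b})"
    by simp
  have "card S11 + card S21 = card (S11 \<union> S21)"
    using fin by (intro card_Un_disjoint[symmetric]) (auto simp: S11_def S21_def)
  also have "S11 \<union> S21 = prod.swap ` Sigma {..<m} (\<lambda>b. {a. a < n \<and> R a b})"
    using \<open>m \<le> n\<close> by (force simp: S11_def S21_def image_iff)
  finally have cols: "card S11 + card S21 = (\<Sum>b<m. card {a. a < n \<and> R a b})"
    by (simp add: card_image)
  \<comment> \<open>The excess of the row sums over the column sums is card S12 - card S21, while card S12
    is bounded by the size m (n - m) of its block.\<close>
  have "card S12 \<le> m * (n - m)"
    using card_mono[OF _ S12_sub] by simp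
  then have "card S21 = 0" and S12_card: "card S12 = m * (n - m)"
    using rows cols excess by linarith+
  then have "S21 = {}"
    using fin(3) by simp
  moreover have "S12 = {..<m} \<times> {m..<n}"
    using S12_sub S12_card by (intro card_subset_eq) auto
  ultimately show "\<forall>a b. m \<le> a \<longrightarrow> a < n \<longrightarrow> b < m \<longrightarrow> \<not> R a b"
    and "\<forall>a b. a < m \<longrightarrow> m \<le> b \<longrightarrow> b < n \<longrightarrow> R a b"
    by (auto simp: S21_def S12_def set_eq_iff)
qed

lemma ex1_if_card_eq_1:
  assumes "card {x \<in> S. P x} = 1"
  shows "\<exists>!x\<in>S. P x"
proof -
  obtain x where x: "{x \<in> S. P x} = {x}"
    using card_1_singletonE[OF assms] by blast
  then have "x \<in> S \<and> P x"
    by blast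
  moreover have "y = x" if "y \<in> S" "P y" for y
    using x that by blast
  ultimately show ?thesis
    by blast
qed

lemma unique_pattern_permutes:
  assumes rows: "\<And>a. a \<in> S \<Longrightarrow> \<exists>!b\<in>S. R a b" and cols: "\<And>b. b \<in> S \<Longrightarrow> \<exists>!a\<in>S. R a b"
  obtains \<tau> where "\<tau> permutes S" "\<And>a b. a \<in> S \<Longrightarrow> b \<in> S \<Longrightarrow> R a b \<longleftrightarrow> \<tau> a = b"
proof -
  define \<tau> where "\<tau> a = (if a \<in> S then THE b. b \<in> S \<and> R a b else a)" for a
  have \<tau>: "\<tau> a \<in> S \<and> R a (\<tau> a)" if "a \<in> S" for a
    using theI'[of "\<lambda>b. b \<in> S \<and> R a b"] rows that by (auto simp: \<tau>_def)
  have \<tau>_iff: "R a b \<longleftrightarrow> \<tau> a = b" if "a \<in> S" "b \<in> S" for a b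
    using \<tau>[OF that(1)] rows that by blast
  have "inj_on \<tau> S"
  proof (rule inj_onI)
    fix a a' assume "a \<in> S" "a' \<in> S" "\<tau> a = \<tau> a'"
    then show "a = a'"
      using \<tau>[of a] \<tau>[of a'] cols by metis
  qed
  moreover have "\<tau> ` S = S"
  proof
    show "\<tau> ` S \<subseteq> S"
      using \<tau> by blast
    show "S \<subseteq> \<tau> ` S"
    proof
      fix b assume "b \<in> S"
      then obtain a where "a \<in> S" "R a b"
        using cols by blast
      then show "b \<in> \<tau> ` S"
        using \<tau>_iff \<open>b \<in> S\<close> by blast
    qed
  qed
  moreover have "\<tau> a = a" if "a \<notin> S" for a
    using that by (simp add: \<tau>_def)
  ultimately have "\<tau> permutes S"
    by (intro bij_imp_permutes) (auto simp: bij_betw_def)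
  from this \<tau>_iff show ?thesis by (rule that)
qed

lemma staircase_top_rows:
  fixes R :: "nat \<Rightarrow> nat \<Rightarrow> bool"
  assumes "k \<le> n"
    and rows: "\<And>a. a < n \<Longrightarrow> card {b. b < n \<and> R a b} = (if a < k then n - a else 1)"
    and cols: "\<And>b. b < n \<Longrightarrow> card {a. a < n \<and> R a b} = (if b < k then b + 1 else k + 1)"
  shows "\<And>a b. a < k \<Longrightarrow> b < n \<Longrightarrow> R a b \<longleftrightarrow> a \<le> b"
    and "\<And>a b. k \<le> a \<Longrightarrow> a < n \<Longrightarrow> b < k \<Longrightarrow> \<not> R a b"
proof -
  have "(\<Sum>a<m. card {b. b < n \<and> R a b}) = (\<Sum>b<m. card {a. a < n \<and> R a b}) + m * (n - m)"
    if "m \<le> k" for m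
  proof -
    have "(\<Sum>a<m. card {b. b < n \<and> R a b}) = (\<Sum>a<m. n - a)"
      using rows that \<open>k \<le> n\<close> by (intro sum.cong) auto
    moreover have "(\<Sum>b<m. card {a. a < n \<and> R a b}) = (\<Sum>b<m. b + 1)"
      using cols that \<open>k \<le> n\<close> by (intro sum.cong) auto
    ultimately show ?thesis
      using staircase_sum[of m n] that \<open>k \<le> n\<close> by simp
  qed
  note blocks = corner_blocks[OF _ this]
  have zero: "\<not> R a b" if "m \<le> k" "m \<le> a" "a < n" "b < m" for m a b
    using blocks(1)[of m] that \<open>k \<le> n\<close> by auto
  have one: "R a b" if "m \<le> k" "a < m" "m \<le> b" "b < n" for m a b
    using blocks(2)[of m] that \<open>k \<le> n\<close> by auto
  have diagonal: "R b b" if "b < k" for b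
  proof -
    have "{a. a < n \<and> R a b} \<subseteq> {..b}"
    proof
      fix a assume "a \<in> {a. a < n \<and> R a b}"
      then show "a \<in> {..b}"
        using zero[of "b + 1" a b] that by (cases "b < a") auto
    qed
    moreover have "card {a. a < n \<and> R a b} = card {..b}"
      using cols[of b] that \<open>k \<le> n\<close> by simp
    ultimately have "{a. a < n \<and> R a b} = {..b}"
      by (intro card_subset_eq) auto
    then show ?thesis
      using that \<open>k \<le> n\<close> by auto
  qed
  show "R a b \<longleftrightarrow> a \<le> b" if "a < k" "b < n" for a b
  proof -
    consider "b < a" | "a < b" | "a = b"
      by linarith
    then show ?thesis
      using zero[of a a b] one[of "a + 1" a b] diagonal[of a] that \<open>k \<le> n\<close> by cases auto
  qed
  show "\<not> R a b" if "k \<le> a" "a < n" "b < k" for a b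
    using zero[of k a b] that by simp
qed

lemma staircase_bottom_rows:
  fixes R :: "nat \<Rightarrow> nat \<Rightarrow> bool"
  assumes "k \<le> n"
    and rows: "\<And>a. a < n \<Longrightarrow> card {b. b < n \<and> R a b} = (if a < k then n - a else 1)"
    and cols: "\<And>b. b < n \<Longrightarrow> card {a. a < n \<and> R a b} = (if b < k then b + 1 else k + 1)"
  obtains \<tau> where "\<tau> permutes {k..<n}" "\<And>a b. a \<in> {k..<n} \<Longrightarrow> b < n \<Longrightarrow> R a b \<longleftrightarrow> \<tau> a = b"
proof -
  note top = staircase_top_rows[OF assms]
  have rows_ex1: "\<exists>!b\<in>{k..<n}. R a b" if "a \<in> {k..<n}" for a
  proof -
    have "{b \<in> {k..<n}. R a b} = {b. b < n \<and> R a b}"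
      using top(2)[of a] that by (auto intro: leI)
    then show ?thesis
      using rows[of a] that by (intro ex1_if_card_eq_1) simp
  qed
  have cols_ex1: "\<exists>!a\<in>{k..<n}. R a b" if "b \<in> {k..<n}" for b
  proof -
    have "card {a. a < n \<and> R a b} = card ({..<k} \<union> {a \<in> {k..<n}. R a b})"
      using top(1) that by (intro arg_cong[where f = card]) auto
    also have "\<dots> = k + card {a \<in> {k..<n}. R a b}"
      by (subst card_Un_disjoint) auto
    finally have "card {a. a < n \<and> R a b} = k + card {a \<in> {k..<n}. R a b}" .
    then show ?thesis
      using cols[of b] that by (intro ex1_if_card_eq_1) simp
  qed
  obtain \<tau> where \<tau>: "\<tau> permutes {k..<n}"
    and \<tau>_iff: "\<And>a b. a \<in> {k..<n} \<Longrightarrow> b \<in> {k..<n} \<Longrightarrow> R a b \<longleftrightarrow> \<tau> a = b"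
    using unique_pattern_permutes[of "{k..<n}" R, OF rows_ex1 cols_ex1] by blast
  have "R a b \<longleftrightarrow> \<tau> a = b" if "a \<in> {k..<n}" "b < n" for a b
  proof (cases "k \<le> b")
    case True
    then show ?thesis
      using \<tau>_iff that by simp
  next
    case False
    then show ?thesis
      using top(2)[of a b] permutes_in_image[OF \<tau>, of a] that by auto
  qed
  with \<tau> show ?thesis
    by (rule that)
qed

lemma bit_eqI: "(x = 1 \<longleftrightarrow> y = 1) \<Longrightarrow> (x::bit) = y"
  by (metis bit_not_one_iff)

lemma staircase_normal_form:
  assumes "k \<le> n" "B \<in> carrier_mat n n"
    and rows: "\<And>a. a < n \<Longrightarrow> row_ones B a = row_ones (U n k) a"
    and cols: "\<And>b. b < n \<Longrightarrow> col_ones B b = col_ones (U n k) b"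
  obtains \<rho> where "\<rho> permutes {..<n}" "\<And>a b. a < n \<Longrightarrow> b < n \<Longrightarrow> B $$ (a, b) = U n k $$ (\<rho> a, b)"
proof -
  let ?R = "\<lambda>a b. B $$ (a, b) = 1"
  have rows_R: "card {b. b < n \<and> ?R a b} = (if a < k then n - a else 1)" if "a < n" for a
    using rows[OF that] row_ones_U[OF that] assms(2) by (simp add: row_ones_def)
  have cols_R: "card {a. a < n \<and> ?R a b} = (if b < k then b + 1 else k + 1)" if "b < n" for b
    using cols[OF that] col_ones_U[OF assms(1) that] assms(2) by (simp add: col_ones_def)
  obtain \<tau> where \<tau>: "\<tau> permutes {k..<n}"
    and \<tau>_iff: "\<And>a b. a \<in> {k..<n} \<Longrightarrow> b < n \<Longrightarrow> ?R a b \<longleftrightarrow> \<tau> a = b"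
    using staircase_bottom_rows[OF assms(1) rows_R cols_R] by blast
  have "B $$ (a, b) = U n k $$ (\<tau> a, b)" if "a < n" "b < n" for a b
  proof (rule bit_eqI)
    show "?R a b \<longleftrightarrow> U n k $$ (\<tau> a, b) = 1"
    proof (cases "a < k")
      case True
      then have "\<tau> a = a"
        using permutes_not_in[OF \<tau>] by simp
      then show ?thesis
        using staircase_top_rows(1)[OF assms(1) rows_R cols_R True that(2)] True that
        by (simp add: U_eq_one_iff)
    next
      case False
      then have "\<tau> a \<in> {k..<n}"
        using permutes_in_image[OF \<tau>] that by simp
      then show ?thesis
        using \<tau>_iff[of a b] False that by (auto simp: U_eq_one_iff)
    qed
  qed
  moreover have "\<tau> permutes {..<n}"
    using \<tau> by (rule permutes_subset) auto
  ultimately show ?thesis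
    using that by blast
qed

lemma perm_mat_factorization_if_eta_theta_eq_U:
  assumes "k \<le> n" and A: "A \<in> carrier_mat n n"
    and "eta A = eta (U n k)" "theta A = theta (U n k)"
  obtains \<pi> \<sigma> where "\<pi> permutes {..<n}" "\<sigma> permutes {..<n}"
    "A = perm_mat n \<pi> * U n k * perm_mat n \<sigma>"
proof -
  obtain p where p: "p permutes {..<n}" and rows: "\<forall>i<n. row_ones A i = row_ones (U n k) (p i)"
    using assms(3) eta_eq_iff_row_ones_permuted[OF A U_carrier] by blast
  obtain q where q: "q permutes {..<n}" and cols: "\<forall>j<n. col_ones A j = col_ones (U n k) (q j)"
    using assms(4) theta_eq_iff_col_ones_permuted[OF A U_carrier] by blast
  have p': "inv_into UNIV p permutes {..<n}" and q': "inv_into UNIV q permutes {..<n}"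
    using p q by (simp_all add: permutes_inv)
  define B where "B = perm_mat n p * A * perm_mat n (inv_into UNIV q)"
  have B: "B \<in> carrier_mat n n"
    unfolding B_def using A by (intro mult_carrier_mat) auto
  have rows_B: "row_ones B a = row_ones (U n k) a" if "a < n" for a
    using rows permutes_in_image[OF p'] permutes_inverses(1)[OF p] that
    by (simp add: B_def row_ones_perm_mat_mult_mult[OF p q' A])
  have cols_B: "col_ones B b = col_ones (U n k) b" if "b < n" for b
    using cols permutes_in_image[OF q'] permutes_inverses(1)[OF q] that
    by (simp add: B_def col_ones_perm_mat_mult_mult[OF p q' A])
  obtain \<rho> where \<rho>: "\<rho> permutes {..<n}"
    and B_U: "\<And>a b. a < n \<Longrightarrow> b < n \<Longrightarrow> B $$ (a, b) = U n k $$ (\<rho> a, b)"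
    using staircase_normal_form[OF assms(1) B rows_B cols_B] by blast
  have "A = perm_mat n (inv_into UNIV (\<rho> \<circ> p)) * U n k * perm_mat n q"
  proof (rule eq_perm_mat_mult_mult_if_index[OF permutes_compose[OF p \<rho>] q A U_carrier])
    fix i j assume ij: "i < n" "j < n"
    then have pq: "p i < n" "q j < n"
      using permutes_in_image[OF p] permutes_in_image[OF q] by simp_all
    have "A $$ (i, j) = A $$ (inv_into UNIV p (p i), inv_into UNIV q (q j))"
      by (simp add: permutes_inverses(2)[OF p] permutes_inverses(2)[OF q])
    also have "\<dots> = B $$ (p i, q j)"
      unfolding B_def by (rule index_perm_mat_mult_mult[OF p q' A pq, symmetric])
    also have "\<dots> = U n k $$ ((\<rho> \<circ> p) i, q j)"
      using B_U[OF pq] by simp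
    finally show "A $$ (i, j) = U n k $$ ((\<rho> \<circ> p) i, q j)" .
  qed
  with permutes_inv[OF permutes_compose[OF p \<rho>]] q show ?thesis
    by (rule that)
qed

theorem mainTheorem1:
  fixes n k :: nat
  assumes "k \<le> n"
  shows "H n k = {perm_mat n \<pi> * U n k * perm_mat n \<sigma> | \<pi> \<sigma>.
                    \<pi> permutes {..<n} \<and> \<sigma> permutes {..<n}}"
proof (intro equalityI subsetI)
  fix A assume "A \<in> H n k"
  then have "A \<in> carrier_mat n n" "eta A = eta (U n k)" "theta A = theta (U n k)"
    using eta_U[OF assms] theta_U[OF assms] by (simp_all add: H_def GL2_def)
  then obtain \<pi> \<sigma> where "\<pi> permutes {..<n}" "\<sigma> permutes {..<n}"
    "A = perm_mat n \<pi> * U n k * perm_mat n \<sigma>"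
    using perm_mat_factorization_if_eta_theta_eq_U[OF assms] by blast
  then show "A \<in> {perm_mat n \<pi> * U n k * perm_mat n \<sigma> | \<pi> \<sigma>.
                    \<pi> permutes {..<n} \<and> \<sigma> permutes {..<n}}"
    by blast
next
  fix A assume "A \<in> {perm_mat n \<pi> * U n k * perm_mat n \<sigma> | \<pi> \<sigma>.
                    \<pi> permutes {..<n} \<and> \<sigma> permutes {..<n}}"
  then obtain \<pi> \<sigma> where \<pi>: "\<pi> permutes {..<n}" and \<sigma>: "\<sigma> permutes {..<n}"
    and A: "A = perm_mat n \<pi> * U n k * perm_mat n \<sigma>"
    by blast
  have "A \<in> carrier_mat n n"
    unfolding A by (intro mult_carrier_mat) auto
  moreover have "invertible_mat A"
    unfolding A using invertible_perm_mat_mult_mult[OF \<pi> \<sigma> U_carrier] det_U by simp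
  ultimately show "A \<in> H n k"
    unfolding H_def GL2_def using A assms \<pi> \<sigma>
    by (simp add: eta_perm_mat_mult_mult theta_perm_mat_mult_mult eta_U theta_U)
qed

end
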